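(* Let $f:\{0,1\}^n \to \{0,1\}$ have degree $d=\deg(f)$, and suppose that $M_1,\dots,M_\ell \subseteq [n]$ are pairwise disjoint sets such that for each $i$ the monomial $\prod_{j\in M_i} x_j$ has non-zero coefficient in the multilinear polynomial of $f$ and $|M_i| = d$. Let $M=\bigcup_{i=1}^\ell M_i$. Then for every assignment $\alpha: M \to \{0,1\}$, the restricted function $f_\alpha:\{0,1\}^{[n]\setminus M}\to\{0,1\}$ satisfies $$\mathrm{bs}(f_\alpha) \le \mathrm{bs}(f) - \ell.$$ In particular, $\ell \le \mathrm{bs}(f)$.
   Context: Every $f:\{0,1\}^n\to\{0,1\}$ agrees on $\{0,1\}^n$ with a unique multilinear real polynomial; $\deg(f)$ is its degree, and a monomial "of $f$" is one with non-zero coefficient in it. For $H\subseteq[n]$ and $\alpha:H\to\{0,1\}$, $f_\alpha$ denotes the function of the remaining variables obtained by setting $x_h=\alpha(h)$ for $h\in H$. For $x\in\{0,1\}^n$ and $B\subseteq[n]$, $x^B$ is $x$ with all bits in $B$ flipped. The block sensitivity $\mathrm{bs}_x(f)$ at $x$ is the maximum number $b$ of pairwise disjoint sets $B_1,\dots,B_b\subseteq[n]$ with $f(x^{B_j})\ne f(x)$ for all $j$, and $\mathrm{bs}(f)=\max_x \mathrm{bs}_x(f)$ (for a function of zero variables, $\mathrm{bs}=0$). *)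

theory Defs
  imports Complex_Main
begin

text \<open>A Boolean function on the variable set V (finite set of indices) is modelled as
  f :: (nat \<Rightarrow> bool) \<Rightarrow> bool; only inputs in bool_inputs V (all variables outside V are
  False) are relevant.\<close>

definition bool_inputs :: "nat set \<Rightarrow> (nat \<Rightarrow> bool) set" where
  "bool_inputs V = {x. \<forall>j. j \<notin> V \<longrightarrow> \<not> x j}"

definition is_multilinear_rep :: "nat set \<Rightarrow> ((nat \<Rightarrow> bool) \<Rightarrow> bool) \<Rightarrow> (nat set \<Rightarrow> real) \<Rightarrow> bool" where
  "is_multilinear_rep V f c \<longleftrightarrow>
     (\<forall>S. \<not> S \<subseteq> V \<longrightarrow> c S = 0) \<and>
     (\<forall>x \<in> bool_inputs V. of_bool (f x) = (\<Sum>S\<in>Pow V. c S * (\<Prod>j\<in>S. of_bool (x j))))"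

text \<open>The (unique) multilinear polynomial of f: coefficient of the monomial prod_{j in S} x_j.\<close>
definition ml_coeff :: "nat set \<Rightarrow> ((nat \<Rightarrow> bool) \<Rightarrow> bool) \<Rightarrow> nat set \<Rightarrow> real" where
  "ml_coeff V f = (THE c. is_multilinear_rep V f c)"

definition bf_degree :: "nat set \<Rightarrow> ((nat \<Rightarrow> bool) \<Rightarrow> bool) \<Rightarrow> nat" where
  "bf_degree V f = Max (insert 0 {card S | S. S \<subseteq> V \<and> ml_coeff V f S \<noteq> 0})"

definition flip :: "(nat \<Rightarrow> bool) \<Rightarrow> nat set \<Rightarrow> nat \<Rightarrow> bool" where
  "flip x B = (\<lambda>j. if j \<in> B then \<not> x j else x j)"

definition bs_at :: "nat set \<Rightarrow> ((nat \<Rightarrow> bool) \<Rightarrow> bool) \<Rightarrow> (nat \<Rightarrow> bool) \<Rightarrow> nat" where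
  "bs_at V f x = Max {b. \<exists>B :: nat \<Rightarrow> nat set.
      (\<forall>i<b. B i \<subseteq> V \<and> f (flip x (B i)) \<noteq> f x) \<and>
      (\<forall>i<b. \<forall>k<b. i \<noteq> k \<longrightarrow> B i \<inter> B k = {})}"

definition bs :: "nat set \<Rightarrow> ((nat \<Rightarrow> bool) \<Rightarrow> bool) \<Rightarrow> nat" where
  "bs V f = Max (bs_at V f ` bool_inputs V)"

definition restrict_bf :: "((nat \<Rightarrow> bool) \<Rightarrow> bool) \<Rightarrow> nat set \<Rightarrow> (nat \<Rightarrow> bool) \<Rightarrow> (nat \<Rightarrow> bool) \<Rightarrow> bool" where
  "restrict_bf f H \<alpha> = (\<lambda>x. f (\<lambda>j. if j \<in> H then \<alpha> j else x j))"

end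

theory Submission
  imports Defs
begin

(* Expanding f into its multilinear polynomial, the alternating sum of f over the subcube of
   flips of a set S at an input z equals, up to a sign, the sum of c_R z^(R - S) over the monomials
   R containing S. For a monomial S of maximal degree only R = S survives, so f is not constant on
   that subcube: each M_i contains a sensitive block at every input. Take disjoint sensitive
   blocks of f_alpha at an input x attaining bs(f_alpha); they avoid M, so they remain sensitive
   for f at x extended by alpha, and together with one sensitive block inside each M_i they give
   bs(f_alpha) + l disjoint sensitive blocks of f. *)

lemma finite_bool_inputs:
  assumes "finite V" shows "finite (bool_inputs V)"
proof -
  have "bool_inputs V \<subseteq> (\<lambda>A j. j \<in> A) ` Pow V"
  proof
    fix x assume "x \<in> bool_inputs V"
    then have "x = (\<lambda>j. j \<in> {j\<in>V. x j})" by (auto simp: bool_inputs_def)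
    then show "x \<in> (\<lambda>A j. j \<in> A) ` Pow V" by blast
  qed
  then show ?thesis using assms finite_subset by blast
qed

lemma flip_in_bool_inputs:
  "x \<in> bool_inputs V \<Longrightarrow> B \<subseteq> V \<Longrightarrow> flip x B \<in> bool_inputs V"
  by (auto simp: bool_inputs_def flip_def)

lemma sum_Pow_insert_monomials:
  fixes c :: "nat set \<Rightarrow> real"
  assumes V: "finite V" and a: "a \<notin> V"
  shows "(\<Sum>S\<in>Pow (insert a V). c S * (\<Prod>j\<in>S. of_bool (x j)))
       = (\<Sum>S\<in>Pow V. c S * (\<Prod>j\<in>S. of_bool (x j)))
         + of_bool (x a) * (\<Sum>S\<in>Pow V. c (insert a S) * (\<Prod>j\<in>S. of_bool (x j)))"
proof -
  have "Pow V \<inter> insert a ` Pow V = {}" "inj_on (insert a) (Pow V)"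
    using a by (auto simp: inj_on_def)
  moreover have "(\<Prod>j\<in>insert a S. of_bool (x j) :: real) = of_bool (x a) * (\<Prod>j\<in>S. of_bool (x j))"
    if "S \<in> Pow V" for S
    using that a V by (subst prod.insert) (auto dest: finite_subset)
  ultimately show ?thesis
    using V by (simp add: Pow_insert sum.union_disjoint sum.reindex sum_distrib_left mult.assoc)
qed

(* f x = f_0 x + x_a (f_1 x - f_0 x), where f_b sets x_a to b *)
lemma is_multilinear_rep_insert:
  assumes V: "finite V" and a: "a \<notin> V"
    and c0: "is_multilinear_rep V (\<lambda>x. f (x(a := False))) c0"
    and c1: "is_multilinear_rep V (\<lambda>x. f (x(a := True))) c1"
  shows "is_multilinear_rep (insert a V) f
           (\<lambda>S. if a \<in> S then c1 (S - {a}) - c0 (S - {a}) else c0 S)"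
    (is "is_multilinear_rep _ _ ?c")
  unfolding is_multilinear_rep_def
proof (intro conjI allI impI ballI)
  fix S assume "\<not> S \<subseteq> insert a V"
  then have "\<not> S \<subseteq> V" "a \<in> S \<Longrightarrow> \<not> S - {a} \<subseteq> V" by auto
  then show "?c S = 0" using c0 c1 unfolding is_multilinear_rep_def by auto
next
  fix x assume x: "x \<in> bool_inputs (insert a V)"
  let ?P = "\<lambda>S. (\<Prod>j\<in>S. of_bool (x j) :: real)"
  let ?x0 = "x(a := False)"
  have x0: "?x0 \<in> bool_inputs V" using x by (auto simp: bool_inputs_def)
  have P0: "(\<Sum>S\<in>Pow V. c S * (\<Prod>j\<in>S. of_bool (?x0 j))) = (\<Sum>S\<in>Pow V. c S * ?P S)" for c
    using a by (intro sum.cong refl arg_cong2[where f = "(*)"] prod.cong) auto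
  have e0: "of_bool (f (x(a := False))) = (\<Sum>S\<in>Pow V. c0 S * ?P S)"
    using c0 x0 P0[of c0] unfolding is_multilinear_rep_def by (metis fun_upd_upd)
  have e1: "of_bool (f (x(a := True))) = (\<Sum>S\<in>Pow V. c1 S * ?P S)"
    using c1 x0 P0[of c1] unfolding is_multilinear_rep_def by (metis fun_upd_upd)
  have "(\<Sum>S\<in>Pow (insert a V). ?c S * ?P S)
      = (\<Sum>S\<in>Pow V. c0 S * ?P S) + of_bool (x a) * (\<Sum>S\<in>Pow V. (c1 S - c0 S) * ?P S)"
  proof -
    have "a \<notin> S" if "S \<in> Pow V" for S using that a by blast
    then have "(\<Sum>S\<in>Pow V. ?c S * ?P S) = (\<Sum>S\<in>Pow V. c0 S * ?P S)"
      and "(\<Sum>S\<in>Pow V. ?c (insert a S) * ?P S) = (\<Sum>S\<in>Pow V. (c1 S - c0 S) * ?P S)"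
      by (auto intro!: sum.cong)
    then show ?thesis by (simp only: sum_Pow_insert_monomials[OF V a])
  qed
  also have "\<dots> = of_bool (f (x(a := False)))
      + of_bool (x a) * (of_bool (f (x(a := True))) - of_bool (f (x(a := False))))"
    by (simp add: e0 e1 sum_subtractf left_diff_distrib)
  also have "\<dots> = of_bool (f x)"
    by (cases "x a") (simp_all add: fun_upd_idem)
  finally show "of_bool (f x) = (\<Sum>S\<in>Pow (insert a V). ?c S * ?P S)" by (rule sym)
qed

lemma multilinear_rep_exists:
  "finite V \<Longrightarrow> \<exists>c. is_multilinear_rep V f c"
proof (induction V arbitrary: f rule: finite_induct)
  case empty
  have "bool_inputs {} = {\<lambda>_. False}" by (auto simp: bool_inputs_def)
  then show ?case
    by (intro exI[of _ "\<lambda>S. if S = {} then of_bool (f (\<lambda>_. False)) else 0"])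
       (auto simp: is_multilinear_rep_def)
next
  case (insert a V)
  obtain c0 c1 where "is_multilinear_rep V (\<lambda>x. f (x(a := False))) c0"
    and "is_multilinear_rep V (\<lambda>x. f (x(a := True))) c1"
    using insert.IH by meson
  then show ?case using is_multilinear_rep_insert[OF insert.hyps] by blast
qed

lemma prod_of_bool_mem:
  "finite R \<Longrightarrow> (\<Prod>j\<in>R. of_bool (j \<in> S) :: real) = of_bool (R \<subseteq> S)"
  by (induction R rule: finite_induct) auto

lemma eq_0_if_sums_over_Pow_eq_0:
  fixes d :: "nat set \<Rightarrow> real"
  assumes V: "finite V" and sums: "\<And>S. S \<subseteq> V \<Longrightarrow> (\<Sum>R\<in>Pow S. d R) = 0"
  shows "S \<subseteq> V \<Longrightarrow> d S = 0"
proof (induction "card S" arbitrary: S rule: less_induct)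
  case less
  have S: "finite S" using less.prems V finite_subset by auto
  have "(\<Sum>R\<in>Pow S - {S}. d R) = 0"
  proof (intro sum.neutral ballI)
    fix R assume "R \<in> Pow S - {S}"
    then have "R \<subset> S" by auto
    then show "d R = 0" using less S psubset_card_mono by (metis order.trans less_imp_le)
  qed
  then show ?case using sums[OF less.prems] S by (simp add: sum.remove[of "Pow S" S])
qed

lemma multilinear_rep_unique:
  assumes V: "finite V" and c: "is_multilinear_rep V f c" and c': "is_multilinear_rep V f c'"
  shows "c = c'"
proof
  fix S
  have "(\<Sum>R\<in>Pow S. c R - c' R) = 0" if S: "S \<subseteq> V" for S
  proof -
    have x: "(\<lambda>j. j \<in> S) \<in> bool_inputs V" using S by (auto simp: bool_inputs_def)
    have "(\<Sum>R\<in>Pow S. c R - c' R) = (\<Sum>R\<in>Pow V. (c R - c' R) * of_bool (R \<subseteq> S))"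
    proof -
      have "Pow V \<inter> {R. R \<subseteq> S} = Pow S" using S by auto
      then show ?thesis using V by (simp add: sum.If_cases)
    qed
    also have "\<dots> = (\<Sum>R\<in>Pow V. (c R - c' R) * (\<Prod>j\<in>R. of_bool (j \<in> S)))"
      using V by (intro sum.cong refl) (simp add: prod_of_bool_mem finite_subset[OF _ V])
    also have "\<dots> = 0"
      using c c' x unfolding is_multilinear_rep_def by (simp add: left_diff_distrib sum_subtractf)
    finally show ?thesis .
  qed
  then have "S \<subseteq> V \<Longrightarrow> c S - c' S = 0" using eq_0_if_sums_over_Pow_eq_0[OF V] by blast
  moreover have "\<not> S \<subseteq> V \<Longrightarrow> c S = c' S" using c c' by (simp add: is_multilinear_rep_def)
  ultimately show "c S = c' S" by fastforce
qed

lemma is_multilinear_rep_ml_coeff: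
  "finite V \<Longrightarrow> is_multilinear_rep V f (ml_coeff V f)"
  unfolding ml_coeff_def
  by (rule theI'[of "is_multilinear_rep V f"]) (metis multilinear_rep_exists multilinear_rep_unique)

lemma ml_coeff_eq_0_if_degree_less_card:
  assumes V: "finite V" and "bf_degree V f < card S"
  shows "ml_coeff V f S = 0"
proof (rule ccontr)
  assume nz: "ml_coeff V f S \<noteq> 0"
  then have "S \<subseteq> V" using is_multilinear_rep_ml_coeff[OF V] by (auto simp: is_multilinear_rep_def)
  moreover have "finite {card S | S. S \<subseteq> V \<and> ml_coeff V f S \<noteq> 0}"
    using V by (simp add: finite_image_set2)
  ultimately have "card S \<le> bf_degree V f" using nz unfolding bf_degree_def by (intro Max_ge) auto
  then show False using assms by simp
qed

lemma signed_flip_monomial_factor: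
  fixes z :: "nat \<Rightarrow> bool" and R S T :: "nat set"
  defines "g \<equiv> \<lambda>j. - (if j \<in> R then of_bool (\<not> z j) else 1 :: real)"
    and "h \<equiv> \<lambda>j. if j \<in> R then of_bool (z j) else 1 :: real"
  assumes S: "finite S" and R: "finite R" and T: "T \<subseteq> S"
  shows "(-1) ^ card T * (\<Prod>j\<in>R. of_bool (flip z T j) :: real)
       = (\<Prod>j\<in>T. g j) * (\<Prod>j\<in>S - T. h j) * (\<Prod>j\<in>R - S. of_bool (z j))"
proof -
  define k where "k j = (if j \<in> R then of_bool (flip z T j) else 1 :: real)" for j
  have "(\<Prod>j\<in>R. of_bool (flip z T j) :: real)
      = (\<Prod>j\<in>S. k j) * (\<Prod>j\<in>R - S. of_bool (flip z T j))"
    using S R by (simp add: k_def prod.If_cases Int_commute prod.Int_Diff[of R _ S])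
  also have "(\<Prod>j\<in>R - S. of_bool (flip z T j)) = (\<Prod>j\<in>R - S. of_bool (z j) :: real)"
    using T by (intro prod.cong) (auto simp: flip_def)
  also have "(\<Prod>j\<in>S. k j) = (\<Prod>j\<in>T. k j) * (\<Prod>j\<in>S - T. k j)"
    using prod.subset_diff[OF T S] by (simp add: mult.commute)
  also have "(\<Prod>j\<in>S - T. k j) = (\<Prod>j\<in>S - T. h j)"
    by (intro prod.cong) (auto simp: k_def h_def flip_def)
  also have "(-1) ^ card T * (\<Prod>j\<in>T. k j) = (\<Prod>j\<in>T. g j)"
  proof -
    have "(\<Prod>j\<in>T. g j) = (\<Prod>j\<in>T. (-1) * k j)"
      by (intro prod.cong) (auto simp: g_def k_def flip_def)
    then show ?thesis by (simp only: prod.distrib prod_constant)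
  qed
  ultimately show ?thesis by (simp add: algebra_simps)
qed

lemma sum_Pow_signed_flip_monomial:
  fixes z :: "nat \<Rightarrow> bool"
  assumes S: "finite S" and R: "finite R"
  shows "(\<Sum>T\<in>Pow S. (-1) ^ card T * (\<Prod>j\<in>R. of_bool (flip z T j) :: real))
       = (if S \<subseteq> R then (\<Prod>j\<in>S. if z j then 1 else -1) * (\<Prod>j\<in>R - S. of_bool (z j))
          else 0)"
proof -
  define g where "g j = - (if j \<in> R then of_bool (\<not> z j) else 1 :: real)" for j
  define h where "h j = (if j \<in> R then of_bool (z j) else 1 :: real)" for j
  have "(\<Sum>T\<in>Pow S. (-1) ^ card T * (\<Prod>j\<in>R. of_bool (flip z T j) :: real))
      = (\<Sum>T\<in>Pow S. (\<Prod>j\<in>T. g j) * (\<Prod>j\<in>S - T. h j)) * (\<Prod>j\<in>R - S. of_bool (z j))"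
  proof -
    have "(-1) ^ card T * (\<Prod>j\<in>R. of_bool (flip z T j) :: real)
        = (\<Prod>j\<in>T. g j) * (\<Prod>j\<in>S - T. h j) * (\<Prod>j\<in>R - S. of_bool (z j))"
      if "T \<in> Pow S" for T
      using signed_flip_monomial_factor[OF S R] that by (simp add: g_def h_def)
    then show ?thesis by (simp add: sum_distrib_right)
  qed
  also have "(\<Sum>T\<in>Pow S. (\<Prod>j\<in>T. g j) * (\<Prod>j\<in>S - T. h j)) = (\<Prod>j\<in>S. g j + h j)"
    using prod_add[OF S, of g h] by simp
  also have "(\<Prod>j\<in>S. g j + h j) = (if S \<subseteq> R then (\<Prod>j\<in>S. if z j then 1 else -1) else 0)"
  proof (cases "S \<subseteq> R")
    case True
    then show ?thesis by (auto simp: g_def h_def intro!: prod.cong)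
  next
    case False
    then obtain j where "j \<in> S" "j \<notin> R" by blast
    then show ?thesis using S False by (auto simp: g_def h_def intro!: prod_zero)
  qed
  finally show ?thesis by simp
qed

lemma sum_Pow_signed_flip_rep:
  assumes V: "finite V" and c: "is_multilinear_rep V f c" and SV: "S \<subseteq> V"
    and z: "z \<in> bool_inputs V"
  shows "(\<Sum>T\<in>Pow S. (-1) ^ card T * of_bool (f (flip z T)) :: real)
       = (\<Sum>R\<in>{R\<in>Pow V. S \<subseteq> R}. c R * (\<Prod>j\<in>R - S. of_bool (z j)))
         * (\<Prod>j\<in>S. if z j then 1 else -1)"
proof -
  have S: "finite S" using V SV finite_subset by blast
  have "(\<Sum>T\<in>Pow S. (-1) ^ card T * of_bool (f (flip z T)) :: real)
      = (\<Sum>T\<in>Pow S. (-1) ^ card T * (\<Sum>R\<in>Pow V. c R * (\<Prod>j\<in>R. of_bool (flip z T j))))"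
  proof (intro sum.cong refl arg_cong2[where f = "(*)"])
    fix T assume "T \<in> Pow S"
    then have "flip z T \<in> bool_inputs V" using z SV by (auto intro: flip_in_bool_inputs)
    then show "of_bool (f (flip z T)) = (\<Sum>R\<in>Pow V. c R * (\<Prod>j\<in>R. of_bool (flip z T j)))"
      using c unfolding is_multilinear_rep_def by blast
  qed
  also have "\<dots> = (\<Sum>R\<in>Pow V. c R * (\<Sum>T\<in>Pow S. (-1) ^ card T * (\<Prod>j\<in>R. of_bool (flip z T j))))"
    by (simp add: sum_distrib_left sum.swap[of _ "Pow S"] algebra_simps)
  also have "\<dots> = (\<Sum>R\<in>Pow V. if S \<subseteq> R then c R * (\<Prod>j\<in>R - S. of_bool (z j))
                                  * (\<Prod>j\<in>S. if z j then 1 else -1) else 0)"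
    using V S by (intro sum.cong refl) (simp add: sum_Pow_signed_flip_monomial finite_subset[OF _ V])
  also have "\<dots> = (\<Sum>R\<in>{R\<in>Pow V. S \<subseteq> R}. c R * (\<Prod>j\<in>R - S. of_bool (z j)))
                 * (\<Prod>j\<in>S. if z j then 1 else -1)"
    using V by (subst sum.inter_filter) (auto simp: sum_distrib_right intro!: sum.cong)
  finally show ?thesis .
qed

lemma maximal_monomial_has_sensitive_subblock:
  assumes V: "finite V" and c: "is_multilinear_rep V f c" and SV: "S \<subseteq> V"
    and S_ne: "S \<noteq> {}" and cS: "c S \<noteq> 0"
    and maximal: "\<And>R. S \<subset> R \<Longrightarrow> R \<subseteq> V \<Longrightarrow> c R = 0"
    and z: "z \<in> bool_inputs V"
  shows "\<exists>T\<subseteq>S. f (flip z T) \<noteq> f z"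
proof (rule ccontr)
  assume "\<not> ?thesis"
  then have const: "f (flip z T) = f z" if "T \<in> Pow S" for T using that by blast
  have S: "finite S" using V SV finite_subset by blast
  have "(\<Sum>T\<in>Pow S. (-1) ^ card T * of_bool (f (flip z T)) :: real)
      = (\<Sum>T\<in>Pow S. (-1) ^ card T * of_bool (f z))"
    by (intro sum.cong refl) (simp add: const)
  also have "\<dots> = of_bool (f z) * (\<Sum>T\<in>Pow S. (-1) ^ card T * (\<Prod>j\<in>{}. of_bool (flip z T j)))"
    by (simp add: sum_distrib_left mult.commute)
  also have "\<dots> = 0" using sum_Pow_signed_flip_monomial[OF S, of "{}" z] S_ne by simp
  finally have "(\<Sum>R\<in>{R\<in>Pow V. S \<subseteq> R}. c R * (\<Prod>j\<in>R - S. of_bool (z j)))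
      * (\<Prod>j\<in>S. if z j then 1 else -1 :: real) = 0"
    using sum_Pow_signed_flip_rep[OF V c SV z] by simp
  moreover have "(\<Sum>R\<in>{R\<in>Pow V. S \<subseteq> R}. c R * (\<Prod>j\<in>R - S. of_bool (z j))) = c S"
  proof -
    have "(\<Sum>R\<in>{R\<in>Pow V. S \<subseteq> R} - {S}. c R * (\<Prod>j\<in>R - S. of_bool (z j))) = 0"
      using maximal by (intro sum.neutral) auto
    then show ?thesis using V SV by (simp add: sum.remove[of _ S])
  qed
  moreover have "(\<Prod>j\<in>S. if z j then 1 else -1 :: real) \<noteq> 0"
    using S by (simp add: prod_zero_iff)
  ultimately show False using cS by simp
qed

lemma top_degree_monomial_has_sensitive_subblock:
  assumes V: "finite V" and SV: "S \<subseteq> V" and cS: "ml_coeff V f S \<noteq> 0"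
    and deg: "card S = bf_degree V f" "bf_degree V f \<ge> 1"
    and z: "z \<in> bool_inputs V"
  shows "\<exists>T\<subseteq>S. f (flip z T) \<noteq> f z"
proof (rule maximal_monomial_has_sensitive_subblock[OF V is_multilinear_rep_ml_coeff[OF V] SV _ cS _ z])
  show "S \<noteq> {}" using deg by auto
  show "ml_coeff V f R = 0" if R: "S \<subset> R" "R \<subseteq> V" for R
  proof -
    have "card S < card R" using R V finite_subset psubset_card_mono by metis
    then show ?thesis using deg V by (intro ml_coeff_eq_0_if_degree_less_card) auto
  qed
qed

definition sensitive_blocks ::
    "nat set \<Rightarrow> ((nat \<Rightarrow> bool) \<Rightarrow> bool) \<Rightarrow> (nat \<Rightarrow> bool) \<Rightarrow> (nat \<Rightarrow> nat set) \<Rightarrow> nat \<Rightarrow> bool"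
  where "sensitive_blocks V f x B b \<longleftrightarrow>
    (\<forall>i<b. B i \<subseteq> V \<and> f (flip x (B i)) \<noteq> f x) \<and> (\<forall>i<b. \<forall>k<b. i \<noteq> k \<longrightarrow> B i \<inter> B k = {})"

lemma bs_at_eq_Max_sensitive_blocks:
  "bs_at V f x = Max {b. \<exists>B. sensitive_blocks V f x B b}"
  by (simp add: bs_at_def sensitive_blocks_def)

lemma sensitive_blocks_le_card:
  assumes V: "finite V" and B: "sensitive_blocks V f x B b"
  shows "b \<le> card V"
proof -
  have sub: "\<forall>i<b. B i \<subseteq> V" and disj: "\<forall>i<b. \<forall>k<b. i \<noteq> k \<longrightarrow> B i \<inter> B k = {}"
    using B by (simp_all add: sensitive_blocks_def)
  define p where "p i = (SOME j. j \<in> B i)" for i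
  have "B i \<noteq> {}" if "i < b" for i
    using B that by (auto simp: sensitive_blocks_def flip_def)
  then have p: "p i \<in> B i" if "i < b" for i
    using that by (simp add: p_def some_in_eq)
  have "inj_on p {..<b}"
  proof (rule inj_onI)
    fix i k assume "i \<in> {..<b}" "k \<in> {..<b}" "p i = p k"
    then show "i = k" using p disj by (metis IntI empty_iff lessThan_iff)
  qed
  moreover have "p ` {..<b} \<subseteq> V"
    using p sub by auto
  ultimately have "card {..<b} \<le> card V" using V by (rule card_inj_on_le)
  then show ?thesis by simp
qed

lemma finite_sensitive_block_numbers:
  "finite V \<Longrightarrow> finite {b. \<exists>B. sensitive_blocks V f x B b}"
  by (rule finite_subset[of _ "{..card V}"]) (auto dest: sensitive_blocks_le_card)

lemma sensitive_blocks_le_bs_at: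
  "finite V \<Longrightarrow> sensitive_blocks V f x B b \<Longrightarrow> b \<le> bs_at V f x"
  unfolding bs_at_eq_Max_sensitive_blocks by (rule Max_ge) (auto simp: finite_sensitive_block_numbers)

lemma bs_at_attained:
  assumes "finite V"
  shows "\<exists>B. sensitive_blocks V f x B (bs_at V f x)"
proof -
  have "sensitive_blocks V f x B 0" for B by (simp add: sensitive_blocks_def)
  then have "{b. \<exists>B. sensitive_blocks V f x B b} \<noteq> {}" by blast
  then show ?thesis unfolding bs_at_eq_Max_sensitive_blocks
    using Max_in[OF finite_sensitive_block_numbers[OF assms]] by blast
qed

lemma bs_at_le_bs:
  "finite V \<Longrightarrow> x \<in> bool_inputs V \<Longrightarrow> bs_at V f x \<le> bs V f"
  unfolding bs_def by (rule Max_ge) (auto simp: finite_bool_inputs)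

lemma bs_attained:
  assumes "finite V"
  shows "\<exists>x\<in>bool_inputs V. bs V f = bs_at V f x"
proof -
  have "(\<lambda>_. False) \<in> bool_inputs V" by (simp add: bool_inputs_def)
  then have "bs V f \<in> bs_at V f ` bool_inputs V"
    unfolding bs_def using assms by (intro Max_in) (auto simp: finite_bool_inputs)
  then show ?thesis by auto
qed

lemma sensitive_blocks_append:
  assumes "sensitive_blocks V f x B b" and "sensitive_blocks V f x C c"
    and "\<And>i k. i < b \<Longrightarrow> k < c \<Longrightarrow> B i \<inter> C k = {}"
  shows "sensitive_blocks V f x (\<lambda>i. if i < b then B i else C (i - b)) (b + c)"
  unfolding sensitive_blocks_def
proof (rule conjI; intro allI impI)
  fix i assume "i < b + c"
  then show "(if i < b then B i else C (i - b)) \<subseteq> V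
    \<and> f (flip x (if i < b then B i else C (i - b))) \<noteq> f x"
    using assms unfolding sensitive_blocks_def by (cases "i < b") auto
next
  fix i k assume ik: "i < b + c" "k < b + c" "i \<noteq> k"
  have "\<forall>i<b. \<forall>k<b. i \<noteq> k \<longrightarrow> B i \<inter> B k = {}" "\<forall>i<c. \<forall>k<c. i \<noteq> k \<longrightarrow> C i \<inter> C k = {}"
    using assms(1,2) by (simp_all add: sensitive_blocks_def)
  with ik show "(if i < b then B i else C (i - b)) \<inter> (if k < b then B k else C (k - b)) = {}"
    using assms(3)[of i "k - b"] assms(3)[of k "i - b"]
    by (cases "i < b"; cases "k < b") (auto simp: Int_commute)
qed

lemma restrict_bf_flip:
  "B \<inter> H = {} \<Longrightarrow> restrict_bf f H \<alpha> (flip x B) = f (flip (\<lambda>j. if j \<in> H then \<alpha> j else x j) B)"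
  unfolding restrict_bf_def flip_def by (rule arg_cong[where f = f]) auto

lemma bs_restrict_add_le:
  fixes Ms :: "nat \<Rightarrow> nat set" and l :: nat
  defines "M \<equiv> \<Union>i<l. Ms i"
  assumes V: "finite V" and sub: "\<And>i. i < l \<Longrightarrow> Ms i \<subseteq> V"
    and disj: "\<And>i k. i < l \<Longrightarrow> k < l \<Longrightarrow> i \<noteq> k \<Longrightarrow> Ms i \<inter> Ms k = {}"
    and sensitive: "\<And>z i. z \<in> bool_inputs V \<Longrightarrow> i < l \<Longrightarrow> \<exists>T\<subseteq>Ms i. f (flip z T) \<noteq> f z"
  shows "bs (V - M) (restrict_bf f M \<alpha>) + l \<le> bs V f"
proof -
  let ?g = "restrict_bf f M \<alpha>"
  have VM: "finite (V - M)" using V by simp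
  obtain x where x: "x \<in> bool_inputs (V - M)" and bs_x: "bs (V - M) ?g = bs_at (V - M) ?g x"
    using bs_attained[OF VM] by blast
  obtain B where B: "sensitive_blocks (V - M) ?g x B (bs_at (V - M) ?g x)"
    using bs_at_attained[OF VM] by blast
  define z where "z = (\<lambda>j. if j \<in> M then \<alpha> j else x j)"
  have z: "z \<in> bool_inputs V" using x sub by (auto simp: z_def bool_inputs_def M_def)
  have "?g (flip x C) = f (flip z C)" if "C \<subseteq> V - M" for C
  proof -
    have "C \<inter> M = {}" using that by blast
    then show ?thesis unfolding z_def by (rule restrict_bf_flip)
  qed
  moreover have "?g x = f z" by (simp add: restrict_bf_def z_def)
  ultimately have B': "sensitive_blocks V f z B (bs_at (V - M) ?g x)"
    using B by (auto simp: sensitive_blocks_def)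
  obtain T where T: "\<And>i. i < l \<Longrightarrow> T i \<subseteq> Ms i \<and> f (flip z (T i)) \<noteq> f z"
    using sensitive[OF z] by metis
  then have "sensitive_blocks V f z T l"
    using sub disj unfolding sensitive_blocks_def by blast
  moreover have "B i \<inter> T k = {}" if "i < bs_at (V - M) ?g x" "k < l" for i k
    using B T that unfolding sensitive_blocks_def M_def by blast
  ultimately have "bs_at (V - M) ?g x + l \<le> bs_at V f z"
    using sensitive_blocks_le_bs_at[OF V sensitive_blocks_append[OF B']] by blast
  also have "\<dots> \<le> bs V f" using bs_at_le_bs[OF V z] .
  finally show ?thesis using bs_x by simp
qed

theorem proposition5:
  fixes n l :: nat and f :: "(nat \<Rightarrow> bool) \<Rightarrow> bool" and Ms :: "nat \<Rightarrow> nat set"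
  assumes deg_pos: "bf_degree {..<n} f \<ge> 1"
    and sub: "\<And>i. i < l \<Longrightarrow> Ms i \<subseteq> {..<n}"
    and disj: "\<And>i k. i < l \<Longrightarrow> k < l \<Longrightarrow> i \<noteq> k \<Longrightarrow> Ms i \<inter> Ms k = {}"
    and mono: "\<And>i. i < l \<Longrightarrow> ml_coeff {..<n} f (Ms i) \<noteq> 0"
    and card: "\<And>i. i < l \<Longrightarrow> card (Ms i) = bf_degree {..<n} f"
  shows "(\<forall>\<alpha> :: nat \<Rightarrow> bool.
           bs ({..<n} - (\<Union>i<l. Ms i)) (restrict_bf f (\<Union>i<l. Ms i) \<alpha>)
             \<le> bs {..<n} f - l)
         \<and> l \<le> bs {..<n} f"
proof -
  have "\<exists>T\<subseteq>Ms i. f (flip z T) \<noteq> f z" if "z \<in> bool_inputs {..<n}" and "i < l" for z i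
    using that sub mono card deg_pos by (intro top_degree_monomial_has_sensitive_subblock) auto
  then have "bs ({..<n} - (\<Union>i<l. Ms i)) (restrict_bf f (\<Union>i<l. Ms i) \<alpha>) + l \<le> bs {..<n} f"
    for \<alpha>
    by (intro bs_restrict_add_le sub disj) auto
  then show ?thesis by (metis add_leD2 le_diff_conv2)
qed

end
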